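(* Let $f$ be an extended strategy function for a tree $T=(V,E,w)$, let $v\in V$, and suppose some vertex screens $v$; let $s_{\min}$ be the vertex screening $v$ whose interval $f(s_{\min})$ is minimal (smallest) among all vertices screening $v$. Let $f'$ assign to each vertex $u$ an interval $f'(u)$ with $|f'(u)|\ge w(u)$ such that: (1) $f'(u)=f(u)$ for every $u\notin N(v)$; (2) $f'(u)=f(u)$ for every $u\in N(v)$ that screens $v$; (3) $f'(u)<f(s_{\min})$ for every $u\in N(v)$ that does not screen $v$ (including $u=v$). If the restriction of $f'$ to $N(v)$ is an extended strategy function for the subtree $T[N(v)]$, then $f'$ is an extended strategy function for $T$.
   Context: Intervals are of the form $[a,b)$ with integers $0\le a<b$, $|[a,b)|=b-a$; for $I=[a,b)$, $I'=[a',b')$ write $I>I'$ (equivalently $I'<I$) iff $a\ge b'$. An extended strategy function for a tree $T=(V,E,w)$ is a map $f$ assigning to each vertex $v$ an interval $f(v)$ with $|f(v)|\ge w(v)$, such that for any distinct $v_1,v_2$ with $f(v_1)\cap f(v_2)\ne\emptyset$, the path between $v_1$ and $v_2$ contains a vertex $v_3$ with $f(v_3)>f(v_1)$ and $f(v_3)>f(v_2)$. A vertex $u$ screens $v$ if $f(v)<f(u)$ and $u$ is the only vertex $x$ on the path between $v$ and $u$ with $f(v)<f(x)$; vertices screening $v$ have pairwise disjoint intervals, so there is a unique smallest. The screening neighborhood $N(v)$ is the set of vertices $u$ such that either $u$ screens $v$, or the path between $u$ and $v$ contains no vertex screening $v$ (in particular $v\in N(v)$); $T[N(v)]$ is the subtree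 induced by $N(v)$. *)

theory Defs
  imports Main
begin

text \<open>Weighted trees: vertex set V, symmetric irreflexive adjacency E on V, weight w.
Intervals [a,b) are pairs (a,b) of naturals with a < b.\<close>

type_synonym interval = "nat \<times> nat"

definition is_interval :: "interval \<Rightarrow> bool" where
  "is_interval I \<longleftrightarrow> fst I < snd I"

definition ilen :: "interval \<Rightarrow> nat" where
  "ilen I = snd I - fst I"

definition igt :: "interval \<Rightarrow> interval \<Rightarrow> bool" where
  "igt I I' \<longleftrightarrow> fst I \<ge> snd I'"

definition ilt :: "interval \<Rightarrow> interval \<Rightarrow> bool" where
  "ilt I I' \<longleftrightarrow> igt I' I"

definition iinter :: "interval \<Rightarrow> interval \<Rightarrow> bool" where
  "iinter I I' \<longleftrightarrow> {fst I..<snd I} \<inter> {fst I'..<snd I'} \<noteq> {}"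

definition path_between :: "'a set \<Rightarrow> ('a \<Rightarrow> 'a \<Rightarrow> bool) \<Rightarrow> 'a \<Rightarrow> 'a \<Rightarrow> 'a list \<Rightarrow> bool" where
  "path_between V E u v xs \<longleftrightarrow> xs \<noteq> [] \<and> hd xs = u \<and> last xs = v \<and> distinct xs
     \<and> set xs \<subseteq> V \<and> (\<forall>i. Suc i < length xs \<longrightarrow> E (xs ! i) (xs ! Suc i))"

definition is_tree :: "'a set \<Rightarrow> ('a \<Rightarrow> 'a \<Rightarrow> bool) \<Rightarrow> bool" where
  "is_tree V E \<longleftrightarrow> finite V \<and> V \<noteq> {}
     \<and> (\<forall>x y. E x y \<longrightarrow> x \<in> V \<and> y \<in> V \<and> x \<noteq> y \<and> E y x)
     \<and> (\<forall>u\<in>V. \<forall>v\<in>V. \<exists>xs. path_between V E u v xs)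
     \<and> (\<forall>u v xs ys. path_between V E u v xs \<and> path_between V E u v ys \<longrightarrow> xs = ys)"

definition ext_strategy :: "'a set \<Rightarrow> ('a \<Rightarrow> 'a \<Rightarrow> bool) \<Rightarrow> ('a \<Rightarrow> nat) \<Rightarrow> ('a \<Rightarrow> interval) \<Rightarrow> bool" where
  "ext_strategy V E w f \<longleftrightarrow>
     (\<forall>v\<in>V. is_interval (f v) \<and> ilen (f v) \<ge> w v) \<and>
     (\<forall>v1\<in>V. \<forall>v2\<in>V. v1 \<noteq> v2 \<and> iinter (f v1) (f v2) \<longrightarrow>
        (\<exists>xs. path_between V E v1 v2 xs \<and>
           (\<exists>v3\<in>set xs. igt (f v3) (f v1) \<and> igt (f v3) (f v2))))"

definition screens :: "'a set \<Rightarrow> ('a \<Rightarrow> 'a \<Rightarrow> bool) \<Rightarrow> ('a \<Rightarrow> interval) \<Rightarrow> 'a \<Rightarrow> 'a \<Rightarrow> bool" where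
  "screens V E f u v \<longleftrightarrow> ilt (f v) (f u) \<and>
     (\<exists>xs. path_between V E v u xs \<and> (\<forall>x\<in>set xs. ilt (f v) (f x) \<longrightarrow> x = u))"

definition screen_nbhd :: "'a set \<Rightarrow> ('a \<Rightarrow> 'a \<Rightarrow> bool) \<Rightarrow> ('a \<Rightarrow> interval) \<Rightarrow> 'a \<Rightarrow> 'a set" where
  "screen_nbhd V E f v = {u \<in> V. screens V E f u v \<or>
     (\<exists>xs. path_between V E u v xs \<and> (\<forall>x\<in>set xs. \<not> screens V E f x v))}"

end

theory Submission
  imports Defs
begin

text \<open>Only the vertices of N(v) that do not screen v are moved, and they are moved below every
screener of v. A pair of intersecting vertices inside N(v) is separated by the hypothesis on the
subtree. Otherwise one of them, say b, lies outside N(v), so the tree path from b to v meets a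
screener s of v, while the path from a moved vertex to v meets none. Hence s sits on the relevant
path between the two vertices, and since f(s) lies above f(v) and above all moved intervals, either
s itself or the vertex that separated the pair under f still separates it under f'.\<close>

lemma path_between_iff_successively:
  "path_between V E u v xs \<longleftrightarrow>
     xs \<noteq> [] \<and> hd xs = u \<and> last xs = v \<and> distinct xs \<and> set xs \<subseteq> V \<and> successively E xs"
  unfolding path_between_def successively_conv_nth by blast

lemma path_between_mono:
  "path_between V E u v xs \<Longrightarrow> V \<subseteq> W \<Longrightarrow> path_between W E u v xs"
  unfolding path_between_def by blast

lemma path_between_subset: "path_between V E u v xs \<Longrightarrow> set xs \<subseteq> V"
  unfolding path_between_def by blast

lemma path_between_ends_in_set:
  "path_between V E u v xs \<Longrightarrow> u \<in> set xs \<and> v \<in> set xs"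
  unfolding path_between_def by (auto intro: hd_in_set last_in_set)

lemma path_between_rev:
  assumes "path_between V E u v xs" "\<And>x y. E x y \<Longrightarrow> E y x"
  shows "path_between V E v u (rev xs)"
  using assms unfolding path_between_iff_successively
  by (auto simp: hd_rev last_rev elim: successively_mono)

lemma path_between_Cons:
  assumes "path_between V E y c r" "x \<in> V" "x \<notin> set r" "E x y"
  shows "path_between V E x c (x # r)"
  using assms unfolding path_between_iff_successively by (cases r) auto

lemma path_between_tl:
  assumes "path_between V E x c (x # r)" "r \<noteq> []"
  shows "path_between V E (hd r) c r"
  using assms unfolding path_between_iff_successively by (cases r) auto

lemma path_between_suffix:
  assumes "path_between V E u v xs" "x \<in> set xs"
  shows "\<exists>ys. path_between V E x v ys \<and> set ys \<subseteq> set xs"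
  using assms
proof (induction xs arbitrary: u)
  case Nil then show ?case by simp
next
  case (Cons y r)
  have "y = u" using Cons.prems(1) unfolding path_between_def by simp
  with Cons.prems(1) have path: "path_between V E y v (y # r)" by simp
  show ?case
  proof (cases "x = y")
    case True then show ?thesis using path by blast
  next
    case False
    then have "r \<noteq> []" "x \<in> set r" using Cons.prems(2) by auto
    then have "path_between V E (hd r) v r" using path_between_tl[OF path] by blast
    then obtain ys where "path_between V E x v ys" "set ys \<subseteq> set r"
      using Cons.IH \<open>x \<in> set r\<close> by blast
    then show ?thesis by auto
  qed
qed

lemma path_between_append:
  assumes "path_between V E a b p" "path_between V E b c q"
  shows "\<exists>r. path_between V E a c r \<and> set r \<subseteq> set p \<union> set q"
  using assms
proof (induction p arbitrary: a)
  case Nil then show ?case by (simp add: path_between_def)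
next
  case (Cons x p)
  have xa: "x = a" using Cons.prems(1) unfolding path_between_def by simp
  show ?case
  proof (cases "x \<in> set q")
    case True
    then show ?thesis using path_between_suffix[OF Cons.prems(2)] xa by blast
  next
    case False
    have "p \<noteq> []"
      using Cons.prems False path_between_ends_in_set unfolding path_between_def by fastforce
    then obtain r where r: "path_between V E (hd p) c r" "set r \<subseteq> set p \<union> set q"
      using Cons.IH[OF path_between_tl[OF Cons.prems(1)[folded xa]]] Cons.prems(2)
      by (metis path_between_def)
    have "x \<notin> set r" using r(2) False Cons.prems(1) unfolding path_between_def by auto
    moreover have "x \<in> V" "E x (hd p)"
      using Cons.prems(1) \<open>p \<noteq> []\<close> unfolding path_between_iff_successively
      by (auto simp: neq_Nil_conv)
    ultimately have "path_between V E x c (x # r)" using path_between_Cons[OF r(1)] by blast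
    then show ?thesis using r(2) xa by (intro exI[of _ "x # r"]) auto
  qed
qed

lemma is_tree_sym: "is_tree V E \<Longrightarrow> E x y \<Longrightarrow> E y x"
  unfolding is_tree_def by blast

lemma is_tree_path_exists: "is_tree V E \<Longrightarrow> u \<in> V \<Longrightarrow> v \<in> V \<Longrightarrow> \<exists>xs. path_between V E u v xs"
  unfolding is_tree_def by blast

lemma is_tree_path_unique:
  "is_tree V E \<Longrightarrow> path_between V E u v xs \<Longrightarrow> path_between V E u v ys \<Longrightarrow> xs = ys"
  unfolding is_tree_def by blast

lemma is_tree_path_append_subset:
  assumes "is_tree V E" "path_between V E a b p" "path_between V E b c q" "path_between V E a c r"
  shows "set r \<subseteq> set p \<union> set q"
  using path_between_append[OF assms(2,3)] is_tree_path_unique[OF assms(1,4)] by blast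

lemma is_tree_path_suffix_subset:
  assumes "is_tree V E" "path_between V E u v xs" "x \<in> set xs" "path_between V E x v ys"
  shows "set ys \<subseteq> set xs"
  using path_between_suffix[OF assms(2,3)] is_tree_path_unique[OF assms(1,4)] by blast

lemma is_tree_path_prefix_subset:
  assumes "is_tree V E" "path_between V E u v xs" "x \<in> set xs" "path_between V E u x ys"
  shows "set ys \<subseteq> set xs"
proof -
  have "E a b \<Longrightarrow> E b a" for a b using is_tree_sym[OF assms(1)] .
  then have "set (rev ys) \<subseteq> set (rev xs)"
    using is_tree_path_suffix_subset[OF assms(1)] path_between_rev assms(2-4) by (metis set_rev)
  then show ?thesis by simp
qed

lemma path_screener_exists:
  assumes "path_between V E u v xs" "\<And>a b. E a b \<Longrightarrow> E b a"
    and "x \<in> set xs" "ilt (f v) (f x)"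
  shows "\<exists>s\<in>set xs. screens V E f s v"
  using assms(1,3,4)
proof (induction xs arbitrary: u x)
  case Nil then show ?case by simp
next
  case (Cons y r)
  show ?case
  proof (cases "\<exists>z\<in>set r. ilt (f v) (f z)")
    case True
    then have "r \<noteq> []" by auto
    then have "path_between V E (hd r) v r"
      using path_between_tl Cons.prems(1) unfolding path_between_def by (metis list.sel(1))
    then show ?thesis using Cons.IH True by fastforce
  next
    case False
    then have "x = y" using Cons.prems(2,3) by auto
    have "screens V E f y v"
      unfolding screens_def
    proof (intro conjI exI[of _ "rev (y # r)"])
      show "ilt (f v) (f y)" using Cons.prems(3) \<open>x = y\<close> by simp
      show "path_between V E v y (rev (y # r))"
        using path_between_rev[OF Cons.prems(1) assms(2)] Cons.prems(1)
        unfolding path_between_def by auto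
      show "\<forall>z\<in>set (rev (y # r)). ilt (f v) (f z) \<longrightarrow> z = y" using False by auto
    qed
    then show ?thesis by simp
  qed
qed

lemma screens_in_vertices: "screens V E f u v \<Longrightarrow> u \<in> V"
  unfolding screens_def path_between_def by (metis in_mono last_in_set)

lemma iinter_iff:
  "iinter I J \<longleftrightarrow> fst I < snd I \<and> fst J < snd J \<and> fst I < snd J \<and> fst J < snd I"
proof
  assume "iinter I J"
  then obtain t where "t \<in> {fst I..<snd I}" "t \<in> {fst J..<snd J}" unfolding iinter_def by blast
  then show "fst I < snd I \<and> fst J < snd J \<and> fst I < snd J \<and> fst J < snd I" by auto
next
  assume "fst I < snd I \<and> fst J < snd J \<and> fst I < snd J \<and> fst J < snd I"
  then have "max (fst I) (fst J) \<in> {fst I..<snd I} \<inter> {fst J..<snd J}" by auto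
  then show "iinter I J" unfolding iinter_def by blast
qed

lemma iinter_commute: "iinter I J \<longleftrightarrow> iinter J I"
  unfolding iinter_def by blast

definition higher_on_path :: "'a set \<Rightarrow> ('a \<Rightarrow> 'a \<Rightarrow> bool) \<Rightarrow> ('a \<Rightarrow> interval) \<Rightarrow> 'a \<Rightarrow> 'a \<Rightarrow> bool" where
  "higher_on_path V E g a b \<longleftrightarrow>
     (\<exists>xs. path_between V E a b xs \<and> (\<exists>y\<in>set xs. igt (g y) (g a) \<and> igt (g y) (g b)))"

lemma higher_on_pathI:
  "path_between V E a b xs \<Longrightarrow> y \<in> set xs \<Longrightarrow> igt (g y) (g a) \<Longrightarrow> igt (g y) (g b)
   \<Longrightarrow> higher_on_path V E g a b"
  unfolding higher_on_path_def by blast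

lemma higher_on_path_commute:
  "(\<And>x y. E x y \<Longrightarrow> E y x) \<Longrightarrow> higher_on_path V E g a b \<Longrightarrow> higher_on_path V E g b a"
  unfolding higher_on_path_def by (metis path_between_rev set_rev)

lemma higher_on_path_mono:
  "higher_on_path V E g a b \<Longrightarrow> V \<subseteq> W \<Longrightarrow> higher_on_path W E g a b"
  unfolding higher_on_path_def by (meson path_between_mono)

lemma ext_strategy_iff_higher_on_path:
  "ext_strategy V E w f \<longleftrightarrow>
     (\<forall>u\<in>V. is_interval (f u) \<and> ilen (f u) \<ge> w u) \<and>
     (\<forall>a\<in>V. \<forall>b\<in>V. a \<noteq> b \<and> iinter (f a) (f b) \<longrightarrow> higher_on_path V E f a b)"
  unfolding ext_strategy_def higher_on_path_def ..

lemma ext_strategy_higher_on_path: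
  "ext_strategy V E w g \<Longrightarrow> a \<in> V \<Longrightarrow> b \<in> V \<Longrightarrow> a \<noteq> b \<Longrightarrow> iinter (g a) (g b)
   \<Longrightarrow> higher_on_path V E g a b"
  unfolding ext_strategy_iff_higher_on_path by blast

locale screening_reassignment =
  fixes V :: "'a set" and E :: "'a \<Rightarrow> 'a \<Rightarrow> bool" and w :: "'a \<Rightarrow> nat"
    and f f' :: "'a \<Rightarrow> interval" and v smin :: 'a
  assumes tree: "is_tree V E"
    and f: "ext_strategy V E w f"
    and v: "v \<in> V"
    and smin: "screens V E f smin v"
    and smin_min: "\<And>u. screens V E f u v \<Longrightarrow> u \<noteq> smin \<Longrightarrow> ilt (f smin) (f u)"
    and f'_int: "\<And>u. u \<in> V \<Longrightarrow> is_interval (f' u) \<and> ilen (f' u) \<ge> w u"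
    and out: "\<And>u. u \<in> V \<Longrightarrow> u \<notin> screen_nbhd V E f v \<Longrightarrow> f' u = f u"
    and scr: "\<And>u. u \<in> screen_nbhd V E f v \<Longrightarrow> screens V E f u v \<Longrightarrow> f' u = f u"
    and nscr: "\<And>u. u \<in> screen_nbhd V E f v \<Longrightarrow> \<not> screens V E f u v \<Longrightarrow> ilt (f' u) (f smin)"
    and sub: "ext_strategy (screen_nbhd V E f v) E w f'"
begin

abbreviation N :: "'a set" where "N \<equiv> screen_nbhd V E f v"

abbreviation screener :: "'a \<Rightarrow> bool" where "screener u \<equiv> screens V E f u v"

text \<open>A vertex of N that does not screen v is called lowered: only lowered vertices may change
  their interval, and f' moves them below f smin.\<close>

lemma f_interval: "u \<in> V \<Longrightarrow> fst (f u) < snd (f u)"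
  using f unfolding ext_strategy_def is_interval_def by blast

lemma nbhd_subset: "N \<subseteq> V"
  unfolding screen_nbhd_def by blast

lemma screener_in_nbhd: "screener u \<Longrightarrow> u \<in> N"
  using screens_in_vertices unfolding screen_nbhd_def by fast

lemma screener_above_v: "screener s \<Longrightarrow> snd (f v) \<le> fst (f s)"
  unfolding screens_def ilt_def igt_def by blast

lemma screener_start_ge_smin: "screener s \<Longrightarrow> fst (f smin) \<le> fst (f s)"
  using smin_min[of s] f_interval[OF screens_in_vertices[OF smin]]
  unfolding ilt_def igt_def by fastforce

lemma lowered_path_avoids_screeners:
  assumes "u \<in> N" "\<not> screener u" "path_between V E u v xs" "x \<in> set xs"
  shows "\<not> screener x"
proof -
  obtain ys where "path_between V E u v ys" "\<forall>y\<in>set ys. \<not> screener y"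
    using assms(1,2) unfolding screen_nbhd_def by blast
  then show ?thesis using is_tree_path_unique[OF tree _ assms(3)] assms(4) by blast
qed

lemma lowered_below_v:
  assumes "u \<in> N" "\<not> screener u"
  shows "fst (f u) < snd (f v)"
proof (rule ccontr)
  assume "\<not> fst (f u) < snd (f v)"
  then have "ilt (f v) (f u)" unfolding ilt_def igt_def by simp
  obtain xs where xs: "path_between V E u v xs"
    using assms unfolding screen_nbhd_def by blast
  then have "u \<in> set xs" using path_between_ends_in_set by fast
  then show False
    using path_screener_exists[OF xs is_tree_sym[OF tree] _ \<open>ilt (f v) (f u)\<close>]
      lowered_path_avoids_screeners[OF assms xs] by blast
qed

lemma outside_path_meets_screener:
  "u \<in> V \<Longrightarrow> u \<notin> N \<Longrightarrow> path_between V E u v xs \<Longrightarrow> \<exists>s\<in>set xs. screener s"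
  unfolding screen_nbhd_def by blast

lemma f'_lowered: "u \<in> N \<Longrightarrow> \<not> screener u \<Longrightarrow> snd (f' u) \<le> fst (f smin)"
  using nscr unfolding ilt_def igt_def by blast

lemma f'_eq_f_above_v: "u \<in> V \<Longrightarrow> snd (f v) \<le> fst (f u) \<Longrightarrow> f' u = f u"
  using out scr lowered_below_v by fastforce

lemma higher_on_path_outside_outside:
  assumes a: "a \<in> V" "a \<notin> N" and b: "b \<in> V" "b \<notin> N"
    and ab: "a \<noteq> b" "iinter (f' a) (f' b)"
  shows "higher_on_path V E f' a b"
proof -
  have fa: "f' a = f a" and fb: "f' b = f b" using out a b by auto
  obtain xs y where xs: "path_between V E a b xs" and y: "y \<in> set xs"
    and above: "igt (f y) (f a)" "igt (f y) (f b)"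
    using ext_strategy_higher_on_path[OF f a(1) b(1)] ab unfolding higher_on_path_def fa fb by blast
  have yV: "y \<in> V" using xs y path_between_subset by fast
  show ?thesis
  proof (cases "y \<in> N \<and> \<not> screener y")
    case False
    then have "f' y = f y" using out scr yV by blast
    then show ?thesis using higher_on_pathI[OF xs y] above fa fb by simp
  next
    case True
    txt \<open>The path from a to v runs through a screener; as y is lowered, that screener lies
      between a and y, and it is higher than y, hence higher than a and b.\<close>
    obtain ay where ay: "path_between V E a y ay" using is_tree_path_exists[OF tree a(1) yV] ..
    obtain yv where yv: "path_between V E y v yv" using is_tree_path_exists[OF tree yV v] ..
    obtain av where av: "path_between V E a v av" using is_tree_path_exists[OF tree a(1) v] ..
    obtain s where s: "s \<in> set av" "screener s" using outside_path_meets_screener[OF a av] ..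
    have "s \<notin> set yv" using lowered_path_avoids_screeners[OF _ _ yv] True s(2) by blast
    then have "s \<in> set xs"
      using is_tree_path_append_subset[OF tree ay yv av] is_tree_path_prefix_subset[OF tree xs y ay] s(1)
      by blast
    have "fst (f y) < snd (f v)" using lowered_below_v True by blast
    moreover have "snd (f v) \<le> fst (f s)" "f' s = f s"
      using screener_above_v[OF s(2)] scr[OF screener_in_nbhd] s(2) by auto
    ultimately have "igt (f' s) (f' a)" "igt (f' s) (f' b)"
      using above f_interval[OF yV] unfolding igt_def fa fb by auto
    then show ?thesis using higher_on_pathI[OF xs \<open>s \<in> set xs\<close>] by simp
  qed
qed

lemma higher_on_path_screener_outside:
  assumes a: "screener a" and b: "b \<in> V" "b \<notin> N" and ab: "iinter (f' a) (f' b)"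
  shows "higher_on_path V E f' a b"
proof -
  have aV: "a \<in> V" using screens_in_vertices[OF a] .
  have fa: "f' a = f a" and fb: "f' b = f b" using scr[OF screener_in_nbhd[OF a] a] out b by auto
  have "a \<noteq> b" using screener_in_nbhd[OF a] b(2) by blast
  then obtain xs y where xs: "path_between V E a b xs" and y: "y \<in> set xs"
    and above: "igt (f y) (f a)" "igt (f y) (f b)"
    using ext_strategy_higher_on_path[OF f aV b(1)] ab unfolding higher_on_path_def fa fb by blast
  have "y \<in> V" using xs y path_between_subset by fast
  moreover have "snd (f v) \<le> fst (f y)"
    using screener_above_v[OF a] f_interval[OF aV] above(1) unfolding igt_def by linarith
  ultimately have "f' y = f y" by (rule f'_eq_f_above_v)
  then show ?thesis using higher_on_pathI[OF xs y] above fa fb by simp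
qed

lemma higher_on_path_lowered_outside:
  assumes a: "a \<in> N" "\<not> screener a" and b: "b \<in> V" "b \<notin> N" and ab: "iinter (f' a) (f' b)"
  shows "higher_on_path V E f' a b"
proof -
  have aV: "a \<in> V" using a(1) nbhd_subset by blast
  have fb: "f' b = f b" using out b by blast
  have a_low: "snd (f' a) \<le> fst (f smin)" using f'_lowered[OF a] .
  have b_low: "fst (f b) < snd (f' a)" using ab fb unfolding iinter_iff by simp
  txt \<open>The path from b to v meets a screener s, which cannot lie between a and v,
    so s lies between a and b.\<close>
  obtain ab_path where ab_path: "path_between V E a b ab_path"
    using is_tree_path_exists[OF tree aV b(1)] ..
  obtain av where av: "path_between V E a v av" using is_tree_path_exists[OF tree aV v] ..
  obtain bv where bv: "path_between V E b v bv" using is_tree_path_exists[OF tree b(1) v] ..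
  obtain s where s: "s \<in> set bv" "screener s" using outside_path_meets_screener[OF b bv] ..
  have "s \<notin> set av" using lowered_path_avoids_screeners[OF a av] s(2) by blast
  then have s_ab: "s \<in> set ab_path"
    using is_tree_path_append_subset[OF tree path_between_rev[OF ab_path is_tree_sym[OF tree]] av bv] s(1)
    by auto
  have sV: "s \<in> V" and fs: "f' s = f s"
    using screens_in_vertices scr[OF screener_in_nbhd] s(2) by auto
  have s_high: "fst (f smin) \<le> fst (f s)" "snd (f v) \<le> fst (f s)"
    using screener_start_ge_smin screener_above_v s(2) by auto
  have s_int: "fst (f s) < snd (f s)" using f_interval[OF sV] .
  show ?thesis
  proof (cases "iinter (f s) (f b)")
    case True
    have "s \<noteq> b" using screener_in_nbhd[OF s(2)] b(2) by blast
    then obtain sb y where sb: "path_between V E s b sb" and y: "y \<in> set sb"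
      and above: "igt (f y) (f s)" "igt (f y) (f b)"
      using ext_strategy_higher_on_path[OF f sV b(1) _ True] unfolding higher_on_path_def by blast
    have y_ab: "y \<in> set ab_path" using is_tree_path_suffix_subset[OF tree ab_path s_ab sb] y by blast
    have "y \<in> V" using ab_path y_ab path_between_subset by fast
    moreover have "snd (f v) \<le> fst (f y)" using s_high s_int above(1) unfolding igt_def by linarith
    ultimately have fy: "f' y = f y" by (rule f'_eq_f_above_v)
    have "igt (f' y) (f' a)" using above(1) s_int s_high a_low unfolding igt_def fy by linarith
    moreover have "igt (f' y) (f' b)" using above(2) fy fb by simp
    ultimately show ?thesis using higher_on_pathI[OF ab_path y_ab] by simp
  next
    case False
    have "fst (f b) < snd (f s)" using b_low a_low s_high s_int by linarith
    then have "igt (f s) (f b)"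
      using False f_interval[OF b(1)] s_int unfolding iinter_iff igt_def by auto
    moreover have "igt (f' s) (f' a)" using a_low s_high unfolding igt_def fs by linarith
    ultimately show ?thesis using higher_on_pathI[OF ab_path s_ab] fs fb by simp
  qed
qed

lemma higher_on_path_inside_outside:
  assumes "a \<in> N" "b \<in> V" "b \<notin> N" "iinter (f' a) (f' b)"
  shows "higher_on_path V E f' a b"
  using assms
  by (cases "screener a") (auto intro: higher_on_path_screener_outside higher_on_path_lowered_outside)

lemma higher_on_path_reassigned:
  assumes a: "a \<in> V" and b: "b \<in> V" and ab: "a \<noteq> b" "iinter (f' a) (f' b)"
  shows "higher_on_path V E f' a b"
proof -
  consider "a \<in> N" "b \<in> N" | "a \<in> N" "b \<notin> N" | "a \<notin> N" "b \<in> N" | "a \<notin> N" "b \<notin> N"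
    by argo
  then show ?thesis
  proof cases
    case 1
    show ?thesis by (rule higher_on_path_mono[OF ext_strategy_higher_on_path[OF sub 1 ab] nbhd_subset])
  next
    case 2
    show ?thesis by (rule higher_on_path_inside_outside[OF 2(1) b 2(2) ab(2)])
  next
    case 3
    have "iinter (f' b) (f' a)" using ab(2) by (simp only: iinter_commute)
    then have "higher_on_path V E f' b a" by (rule higher_on_path_inside_outside[OF 3(2) a 3(1)])
    then show ?thesis using higher_on_path_commute is_tree_sym[OF tree] by metis
  next
    case 4
    show ?thesis by (rule higher_on_path_outside_outside[OF a 4(1) b 4(2) ab])
  qed
qed

lemma ext_strategy_reassigned: "ext_strategy V E w f'"
  unfolding ext_strategy_iff_higher_on_path using f'_int higher_on_path_reassigned by blast

end

theorem mainTheorem15: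
  fixes V :: "'a set" and E :: "'a \<Rightarrow> 'a \<Rightarrow> bool" and w :: "'a \<Rightarrow> nat"
    and f f' :: "'a \<Rightarrow> interval" and v smin :: 'a
  assumes tree: "is_tree V E"
    and f: "ext_strategy V E w f"
    and v: "v \<in> V"
    and smin: "screens V E f smin v"
    and smin_min: "\<And>u. screens V E f u v \<Longrightarrow> u \<noteq> smin \<Longrightarrow> ilt (f smin) (f u)"
    and f'_int: "\<And>u. u \<in> V \<Longrightarrow> is_interval (f' u) \<and> ilen (f' u) \<ge> w u"
    and out: "\<And>u. u \<in> V \<Longrightarrow> u \<notin> screen_nbhd V E f v \<Longrightarrow> f' u = f u"
    and scr: "\<And>u. u \<in> screen_nbhd V E f v \<Longrightarrow> screens V E f u v \<Longrightarrow> f' u = f u"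
    and nscr: "\<And>u. u \<in> screen_nbhd V E f v \<Longrightarrow> \<not> screens V E f u v \<Longrightarrow> ilt (f' u) (f smin)"
    and sub: "ext_strategy (screen_nbhd V E f v) E w f'"
  shows "ext_strategy V E w f'"
proof -
  interpret screening_reassignment V E w f f' v smin
    using assms by unfold_locales
  show ?thesis by (rule ext_strategy_reassigned)
qed

end
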